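(* Let $\mathcal D=\{\mathbf D_i:i\in I\}$ be a class of upwards-closed dependency notions, and for each $i\in I$ let $\gamma_i:\mathbb N\to\mathbb N$ be such that $\mathbf D_i$ is $\gamma_i$-bounded. Let $\phi\in\mathbf{FO}(=\!(\cdot),\mathcal D,\sqcup)$ be a formula in which each $\mathbf D_i$ occurs $k_i$ times, and let $\nu_\phi(n)=\sum_{i\in I}k_i\gamma_i(n)$. Then for all finite structures $\mathfrak M$ and all teams $X$: if $\mathfrak M\models_X\phi$, then there exists $Y\subseteq X$ with $|Y|\le\nu_\phi(|M|)$ and $\mathfrak M\models_Y\phi$.
   Context: Team semantics (lax version). For a structure $\mathfrak M$ with domain $M$, a team $X$ is a (possibly empty) set of assignments $s:V\to M$, $V$ a finite set of variables; $X(\vec v)=\{s(\vec v):s\in X\}$. Satisfaction for formulas in negation normal form: first-order literal $\alpha$: every $s\in X$ satisfies $\alpha$ (Tarski); $\psi\vee\theta$: $X=Y\cup Z$ with $\mathfrak M\models_Y\psi$, $\mathfrak M\models_Z\theta$; $\psi\wedge\theta$: both; $\exists v\psi$: some $F:X\to\mathcal P(M)\setminus\{\emptyset\}$ with $\mathfrak M\models_{X[F/v]}\psi$, $X[F/v]=\{s[m/v]:s\in X,m\in F(s)\}$; $\forall v\psi$: $\mathfrak M\models_{X[M/v]}\psi$, $X[M/v]=\{s[m/v]:s\in X,m\in M\}$. A $k$-ary dependency notion $\mathbf D$ is an isomorphism-closed class of structures $(M,R)$, $R$ a $k$-ary relation; $\mathfrak M\models_X\mathbf D\vec v$ iff $(M,X(\vec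 v))\in\mathbf D$. $\mathbf D$ is upwards-closed if $(M,R)\in\mathbf D$, $R\subseteq S$ imply $(M,S)\in\mathbf D$. For $\gamma:\mathbb N\to\mathbb N$, $\mathbf D$ is $\gamma$-bounded if for all finite structures $\mathfrak M$, teams $X$ and tuples $\vec v$, whenever $\mathfrak M\models_X\mathbf D\vec v$ there is $Y\subseteq X$ with $|Y|\le\gamma(|M|)$ and $\mathfrak M\models_Y\mathbf D\vec v$. Constancy atoms (all arities): $\mathfrak M\models_X=\!(\vec v)$ iff $s(\vec v)=s'(\vec v)$ for all $s,s'\in X$. Classical disjunction: $\mathfrak M\models_X\phi\sqcup\psi$ iff $\mathfrak M\models_X\phi$ or $\mathfrak M\models_X\psi$. $\mathbf{FO}(=\!(\cdot),\mathcal D,\sqcup)$ is first-order logic in negation normal form extended with constancy atoms, the atoms of $\mathcal D$, and $\sqcup$. *)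

theory Defs
  imports Main
begin

datatype 'v tm = Var 'v | Fn nat "'v tm list"

text \<open>Structures: a domain together with interpretations of function and relation
symbols (symbols are identified by natural numbers; arities are implicit).\<close>

record 'a struc =
  univ :: "'a set"
  fnI  :: "nat \<Rightarrow> 'a list \<Rightarrow> 'a"
  relI :: "nat \<Rightarrow> 'a list \<Rightarrow> bool"

definition struc_wf :: "'a struc \<Rightarrow> bool" where
  "struc_wf A \<longleftrightarrow> univ A \<noteq> {} \<and>
     (\<forall>f xs. set xs \<subseteq> univ A \<longrightarrow> fnI A f xs \<in> univ A)"

definition finite_struc :: "'a struc \<Rightarrow> bool" where
  "finite_struc A \<longleftrightarrow> struc_wf A \<and> finite (univ A)"

type_synonym ('v,'a) assign = "'v \<rightharpoonup> 'a"

definition is_team :: "'a set \<Rightarrow> 'v set \<Rightarrow> ('v,'a) assign set \<Rightarrow> bool" where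
  "is_team M V X \<longleftrightarrow> finite V \<and> (\<forall>s\<in>X. dom s = V \<and> ran s \<subseteq> M)"

fun evl :: "'a struc \<Rightarrow> ('v,'a) assign \<Rightarrow> 'v tm \<Rightarrow> 'a" where
  "evl A s (Var v) = the (s v)"
| "evl A s (Fn f ts) = fnI A f (map (evl A s) ts)"

definition tup :: "('v,'a) assign \<Rightarrow> 'v list \<Rightarrow> 'a list" where
  "tup s vs = map (\<lambda>v. the (s v)) vs"

definition team_rel :: "('v,'a) assign set \<Rightarrow> 'v list \<Rightarrow> 'a list set" where
  "team_rel X vs = (\<lambda>s. tup s vs) ` X"

text \<open>A \<open>k\<close>-ary dependency notion: an isomorphism-closed class of structures \<open>(M,R)\<close>
with \<open>R\<close> a \<open>k\<close>-ary relation on \<open>M\<close>, represented as a predicate on pairs \<open>(M,R)\<close>.\<close>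

definition dep_notion :: "nat \<Rightarrow> ('a set \<Rightarrow> 'a list set \<Rightarrow> bool) \<Rightarrow> bool" where
  "dep_notion k D \<longleftrightarrow>
     (\<forall>M R. D M R \<longrightarrow> (\<forall>t\<in>R. length t = k \<and> set t \<subseteq> M)) \<and>
     (\<forall>M M' R f. D M R \<and> bij_betw f M M' \<longrightarrow> D M' (map f ` R))"

definition upwards_closed :: "nat \<Rightarrow> ('a set \<Rightarrow> 'a list set \<Rightarrow> bool) \<Rightarrow> bool" where
  "upwards_closed k D \<longleftrightarrow>
     (\<forall>M R S. D M R \<and> R \<subseteq> S \<and> (\<forall>t\<in>S. length t = k \<and> set t \<subseteq> M) \<longrightarrow> D M S)"

definition gamma_bounded ::
  "nat \<Rightarrow> ('a set \<Rightarrow> 'a list set \<Rightarrow> bool) \<Rightarrow> (nat \<Rightarrow> nat) \<Rightarrow> bool" where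
  "gamma_bounded k D \<gamma> \<longleftrightarrow>
     (\<forall>(M::'a set) (V::'v set) (X::('v,'a) assign set) vs.
        finite M \<and> M \<noteq> {} \<and> is_team M V X \<and> set vs \<subseteq> V \<and> length vs = k \<and>
        D M (team_rel X vs) \<longrightarrow>
        (\<exists>Y\<subseteq>X. card Y \<le> \<gamma> (card M) \<and> D M (team_rel Y vs)))"

datatype ('v,'i) fm =
    Rel bool nat "'v tm list"    \<comment> \<open>\<open>Rel True R ts\<close> = R(ts), \<open>Rel False R ts\<close> = \<not>R(ts)\<close>
  | Eq bool "'v tm" "'v tm"      \<comment> \<open>\<open>t = u\<close> resp. \<open>\<not> t = u\<close>\<close>
  | Const "'v list"              \<comment> \<open>constancy atom =(vs)\<close>
  | Dep 'i "'v list"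
  | Or "('v,'i) fm" "('v,'i) fm"
  | And "('v,'i) fm" "('v,'i) fm"
  | CDisj "('v,'i) fm" "('v,'i) fm"  \<comment> \<open>classical disjunction\<close>
  | Ex 'v "('v,'i) fm"
  | All 'v "('v,'i) fm"

fun fv_tm :: "'v tm \<Rightarrow> 'v set" where
  "fv_tm (Var v) = {v}"
| "fv_tm (Fn f ts) = (\<Union>t\<in>set ts. fv_tm t)"

primrec fv :: "('v,'i) fm \<Rightarrow> 'v set" where
  "fv (Rel b r ts) = (\<Union>t\<in>set ts. fv_tm t)"
| "fv (Eq b t u) = fv_tm t \<union> fv_tm u"
| "fv (Const vs) = set vs"
| "fv (Dep i vs) = set vs"
| "fv (Or p q) = fv p \<union> fv q"
| "fv (And p q) = fv p \<union> fv q"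
| "fv (CDisj p q) = fv p \<union> fv q"
| "fv (Ex v p) = fv p - {v}"
| "fv (All v p) = fv p - {v}"

primrec wf_fm :: "('i \<Rightarrow> nat) \<Rightarrow> ('v,'i) fm \<Rightarrow> bool" where
  "wf_fm ar (Rel b r ts) = True"
| "wf_fm ar (Eq b t u) = True"
| "wf_fm ar (Const vs) = True"
| "wf_fm ar (Dep i vs) = (length vs = ar i)"
| "wf_fm ar (Or p q) = (wf_fm ar p \<and> wf_fm ar q)"
| "wf_fm ar (And p q) = (wf_fm ar p \<and> wf_fm ar q)"
| "wf_fm ar (CDisj p q) = (wf_fm ar p \<and> wf_fm ar q)"
| "wf_fm ar (Ex v p) = wf_fm ar p"
| "wf_fm ar (All v p) = wf_fm ar p"

primrec occ :: "'i \<Rightarrow> ('v,'i) fm \<Rightarrow> nat" where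
  "occ i (Rel b r ts) = 0"
| "occ i (Eq b t u) = 0"
| "occ i (Const vs) = 0"
| "occ i (Dep j vs) = (if j = i then 1 else 0)"
| "occ i (Or p q) = occ i p + occ i q"
| "occ i (And p q) = occ i p + occ i q"
| "occ i (CDisj p q) = occ i p + occ i q"
| "occ i (Ex v p) = occ i p"
| "occ i (All v p) = occ i p"

text \<open>\<open>\<nu>_\<phi>(n) = \<Sum>_{i\<in>I} k_i \<gamma>_i(n)\<close> (only finitely many \<open>k_i\<close> are nonzero).\<close>
definition nu :: "('i \<Rightarrow> nat \<Rightarrow> nat) \<Rightarrow> ('v,'i) fm \<Rightarrow> nat \<Rightarrow> nat" where
  "nu \<gamma> \<phi> n = (\<Sum>i\<in>{i. occ i \<phi> \<noteq> 0}. occ i \<phi> * \<gamma> i n)"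

section \<open>Lax team semantics\<close>

primrec sat :: "('i \<Rightarrow> 'a set \<Rightarrow> 'a list set \<Rightarrow> bool) \<Rightarrow> 'a struc \<Rightarrow> ('v,'i) fm
                 \<Rightarrow> ('v,'a) assign set \<Rightarrow> bool" where
  "sat D A (Rel b r ts) X = (\<forall>s\<in>X. relI A r (map (evl A s) ts) = b)"
| "sat D A (Eq b t u) X = (\<forall>s\<in>X. (evl A s t = evl A s u) = b)"
| "sat D A (Const vs) X = (\<forall>s\<in>X. \<forall>s'\<in>X. tup s vs = tup s' vs)"
| "sat D A (Dep i vs) X = D i (univ A) (team_rel X vs)"
| "sat D A (Or p q) X = (\<exists>Y Z. X = Y \<union> Z \<and> sat D A p Y \<and> sat D A q Z)"
| "sat D A (And p q) X = (sat D A p X \<and> sat D A q X)"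
| "sat D A (CDisj p q) X = (sat D A p X \<or> sat D A q X)"
| "sat D A (Ex v p) X = (\<exists>F. (\<forall>s\<in>X. F s \<subseteq> univ A \<and> F s \<noteq> {}) \<and>
       sat D A p {s(v \<mapsto> m) | s m. s \<in> X \<and> m \<in> F s})"
| "sat D A (All v p) X = sat D A p {s(v \<mapsto> m) | s m. s \<in> X \<and> m \<in> univ A}"

end

theory Submission
  imports Defs
begin

text \<open>Strengthen the claim: for \<open>\<phi>\<close> true in \<open>X\<close> there is \<open>Y \<subseteq> X\<close> with \<open>|Y| \<le> \<nu>\<^sub>\<phi>(|M|)\<close>
  such that \<open>\<phi>\<close> holds in every team between \<open>Y\<close> and \<open>X\<close>.
  Flat atoms hold in every subteam, so \<open>Y = {}\<close>; a dependency atom is handled by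
  \<open>\<gamma>\<^sub>i\<close>-boundedness plus upward closure; for \<open>\<or>\<close> and \<open>\<and>\<close> the two witnesses are united;
  for quantifiers one keeps, for each assignment of the witness of the supplemented
  team, one assignment of \<open>X\<close> it was obtained from.\<close>

definition sat_between ::
  "('i \<Rightarrow> 'a set \<Rightarrow> 'a list set \<Rightarrow> bool) \<Rightarrow> 'a struc \<Rightarrow> ('v,'i) fm
     \<Rightarrow> ('v,'a) assign set \<Rightarrow> ('v,'a) assign set \<Rightarrow> bool" where
  "sat_between D A \<phi> Y X \<longleftrightarrow> (\<forall>Z. Y \<subseteq> Z \<and> Z \<subseteq> X \<longrightarrow> sat D A \<phi> Z)"

abbreviation supplement ::
  "('v,'a) assign set \<Rightarrow> 'v \<Rightarrow> (('v,'a) assign \<Rightarrow> 'a set) \<Rightarrow> ('v,'a) assign set" where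
  "supplement X v F \<equiv> {s(v \<mapsto> m) | s m. s \<in> X \<and> m \<in> F s}"

lemma finite_struc_univ: "finite_struc A \<Longrightarrow> finite (univ A)" "finite_struc A \<Longrightarrow> univ A \<noteq> {}"
  unfolding finite_struc_def struc_wf_def by simp_all

lemma is_team_finite: "is_team M V X \<Longrightarrow> finite M \<Longrightarrow> finite X"
  unfolding is_team_def
  by (rule finite_subset[OF _ finite_set_of_finite_maps[of V M]]) auto

lemma is_team_subset: "is_team M V X \<Longrightarrow> Y \<subseteq> X \<Longrightarrow> is_team M V Y"
  unfolding is_team_def by (metis subsetD)

lemma is_team_supplement:
  assumes "is_team M V X" and "\<And>s. s \<in> X \<Longrightarrow> F s \<subseteq> M"
  shows "is_team M (insert v V) (supplement X v F)"
  unfolding is_team_def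
proof (rule conjI[OF _ ballI])
  show "finite (insert v V)" using assms(1) by (simp add: is_team_def)
  fix t assume "t \<in> supplement X v F"
  then obtain s m where t: "t = s(v \<mapsto> m)" "s \<in> X" "m \<in> F s" by blast
  have "ran (s(v \<mapsto> m)) \<subseteq> insert m (ran s)" by (auto simp: ran_def)
  moreover have "dom s = V \<and> ran s \<subseteq> M" using assms(1) t(2) unfolding is_team_def by simp
  moreover have "m \<in> M" using assms(2) t(2,3) by blast
  ultimately show "dom t = insert v V \<and> ran t \<subseteq> M"
    using t(1) by auto
qed

lemma supplement_mono: "Z \<subseteq> X \<Longrightarrow> supplement Z v F \<subseteq> supplement X v F"
  by blast

text \<open>Choosing an origin in \<open>X\<close> for each member of \<open>Y'\<close> yields \<open>Y\<close>.\<close>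
lemma supplement_origins:
  assumes "finite Y'" and "Y' \<subseteq> supplement X v F"
  obtains Y where "Y \<subseteq> X" "card Y \<le> card Y'" "\<And>Z. Y \<subseteq> Z \<Longrightarrow> Y' \<subseteq> supplement Z v F"
proof -
  from assms(2) have "\<forall>t\<in>Y'. \<exists>s. s \<in> X \<and> (\<exists>m\<in>F s. t = s(v \<mapsto> m))" by blast
  from bchoice[OF this] obtain g
    where "\<forall>t\<in>Y'. g t \<in> X \<and> (\<exists>m\<in>F (g t). t = (g t)(v \<mapsto> m))" by blast
  then have g: "\<And>t. t \<in> Y' \<Longrightarrow> g t \<in> X \<and> (\<exists>m\<in>F (g t). t = (g t)(v \<mapsto> m))"
    by blast
  show thesis
  proof
    show "g ` Y' \<subseteq> X" using g by blast
    show "card (g ` Y') \<le> card Y'" using assms(1) by (rule card_image_le)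
    show "Y' \<subseteq> supplement Z v F" if "g ` Y' \<subseteq> Z" for Z
      using g that by blast
  qed
qed

lemma team_rel_mono: "Y \<subseteq> Z \<Longrightarrow> team_rel Y vs \<subseteq> team_rel Z vs"
  unfolding team_rel_def by blast

lemma team_rel_tuples:
  assumes "is_team M V X" and "set vs \<subseteq> V" and "t \<in> team_rel X vs"
  shows "length t = length vs \<and> set t \<subseteq> M"
proof -
  obtain s where s: "s \<in> X" "t = tup s vs" using assms(3) unfolding team_rel_def by blast
  have "the (s w) \<in> M" if "w \<in> set vs" for w
  proof -
    from that assms s(1) obtain x where "s w = Some x" unfolding is_team_def by blast
    then show ?thesis using assms(1) s(1) unfolding is_team_def by (auto intro: ranI)
  qed
  then show ?thesis using s(2) unfolding tup_def by auto
qed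

lemma gamma_boundedD:
  fixes X :: "('v,'a) assign set"
  assumes "gamma_bounded TYPE('v) k D \<gamma>" and "finite M" "M \<noteq> {}"
    and "is_team M V X" "set vs \<subseteq> V" "length vs = k" "D M (team_rel X vs)"
  shows "\<exists>Y\<subseteq>X. card Y \<le> \<gamma> (card M) \<and> D M (team_rel Y vs)"
  using assms unfolding gamma_bounded_def by blast

lemma finite_occurring: "finite {i. occ i \<phi> \<noteq> 0}"
proof (induction \<phi>)
  case (Dep j vs)
  then show ?case by (rule finite_subset[of _ "{j}"]) auto
qed (simp_all add: Collect_disj_eq)

lemma nu_eq_sum:
  "finite S \<Longrightarrow> {i. occ i \<phi> \<noteq> 0} \<subseteq> S \<Longrightarrow> nu \<gamma> \<phi> n = (\<Sum>i\<in>S. occ i \<phi> * \<gamma> i n)"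
  unfolding nu_def by (rule sum.mono_neutral_left) auto

lemma nu_additive:
  assumes "\<And>i. occ i \<psi> = occ i \<phi>\<^sub>1 + occ i \<phi>\<^sub>2"
  shows "nu \<gamma> \<psi> n = nu \<gamma> \<phi>\<^sub>1 n + nu \<gamma> \<phi>\<^sub>2 n"
proof -
  let ?S = "{i. occ i \<phi>\<^sub>1 \<noteq> 0} \<union> {i. occ i \<phi>\<^sub>2 \<noteq> 0}"
  have S: "finite ?S" using finite_occurring[of \<phi>\<^sub>1] finite_occurring[of \<phi>\<^sub>2] by blast
  have "nu \<gamma> \<psi> n = (\<Sum>i\<in>?S. occ i \<psi> * \<gamma> i n)" by (rule nu_eq_sum[OF S]) (auto simp: assms)
  also have "\<dots> = (\<Sum>i\<in>?S. occ i \<phi>\<^sub>1 * \<gamma> i n) + (\<Sum>i\<in>?S. occ i \<phi>\<^sub>2 * \<gamma> i n)"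
    by (simp add: assms distrib_right sum.distrib)
  also have "\<dots> = nu \<gamma> \<phi>\<^sub>1 n + nu \<gamma> \<phi>\<^sub>2 n"
    using nu_eq_sum[OF S, of \<phi>\<^sub>1] nu_eq_sum[OF S, of \<phi>\<^sub>2] by auto
  finally show ?thesis .
qed

lemma nu_Dep [simp]: "nu \<gamma> (Dep i vs) n = \<gamma> i n"
proof -
  have "{j. occ j (Dep i vs) \<noteq> 0} = {i}" by auto
  then show ?thesis unfolding nu_def by simp
qed

lemma nu_Or [simp]: "nu \<gamma> (Or \<phi> \<psi>) n = nu \<gamma> \<phi> n + nu \<gamma> \<psi> n"
  and nu_And [simp]: "nu \<gamma> (And \<phi> \<psi>) n = nu \<gamma> \<phi> n + nu \<gamma> \<psi> n"
  and nu_CDisj [simp]: "nu \<gamma> (CDisj \<phi> \<psi>) n = nu \<gamma> \<phi> n + nu \<gamma> \<psi> n"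
  by (rule nu_additive, simp)+

lemma nu_Ex [simp]: "nu \<gamma> (Ex v \<phi>) n = nu \<gamma> \<phi> n"
  and nu_All [simp]: "nu \<gamma> (All v \<phi>) n = nu \<gamma> \<phi> n"
  by (simp_all add: nu_def)

lemma sat_betweenI:
  "(\<And>Z. Y \<subseteq> Z \<Longrightarrow> Z \<subseteq> X \<Longrightarrow> sat D A \<phi> Z) \<Longrightarrow> sat_between D A \<phi> Y X"
  unfolding sat_between_def by blast

lemma sat_betweenD: "sat_between D A \<phi> Y X \<Longrightarrow> Y \<subseteq> Z \<Longrightarrow> Z \<subseteq> X \<Longrightarrow> sat D A \<phi> Z"
  unfolding sat_between_def by blast

lemma sat_between_Dep:
  assumes "upwards_closed (length vs) (D i)" and "is_team (univ A) V X" "set vs \<subseteq> V"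
    and "sat D A (Dep i vs) Y"
  shows "sat_between D A (Dep i vs) Y X"
proof (rule sat_betweenI)
  fix Z assume Z: "Y \<subseteq> Z" "Z \<subseteq> X"
  then have "\<forall>t\<in>team_rel Z vs. length t = length vs \<and> set t \<subseteq> univ A"
    using team_rel_tuples[OF is_team_subset[OF assms(2)] assms(3)] by blast
  then show "sat D A (Dep i vs) Z"
    using assms(1,4) team_rel_mono[OF Z(1), of vs] unfolding upwards_closed_def sat.simps
    by blast
qed

lemma sat_between_And:
  assumes "sat_between D A \<phi> Y\<^sub>1 X" "sat_between D A \<psi> Y\<^sub>2 X"
  shows "sat_between D A (And \<phi> \<psi>) (Y\<^sub>1 \<union> Y\<^sub>2) X"
  using assms unfolding sat_between_def by auto

lemma sat_between_Or:
  assumes "sat_between D A \<phi> Y\<^sub>1 X\<^sub>1" "sat_between D A \<psi> Y\<^sub>2 X\<^sub>2"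
    and "Y\<^sub>1 \<subseteq> X\<^sub>1" "Y\<^sub>2 \<subseteq> X\<^sub>2"
  shows "sat_between D A (Or \<phi> \<psi>) (Y\<^sub>1 \<union> Y\<^sub>2) (X\<^sub>1 \<union> X\<^sub>2)"
proof (rule sat_betweenI)
  fix Z assume Z: "Y\<^sub>1 \<union> Y\<^sub>2 \<subseteq> Z" "Z \<subseteq> X\<^sub>1 \<union> X\<^sub>2"
  have "sat D A \<phi> (Z \<inter> X\<^sub>1)" "sat D A \<psi> (Z \<inter> X\<^sub>2)"
    using assms Z by (auto intro: sat_betweenD)
  moreover have "Z = (Z \<inter> X\<^sub>1) \<union> (Z \<inter> X\<^sub>2)" using Z(2) by blast
  ultimately show "sat D A (Or \<phi> \<psi>) Z" by auto
qed

lemma sat_between_supplement: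
  assumes "finite Y'" "Y' \<subseteq> supplement X v F" "sat_between D A \<phi> Y' (supplement X v F)"
  obtains Y where "Y \<subseteq> X" "card Y \<le> card Y'"
    "\<And>Z. Y \<subseteq> Z \<Longrightarrow> Z \<subseteq> X \<Longrightarrow> sat D A \<phi> (supplement Z v F)"
proof -
  obtain Y where Y: "Y \<subseteq> X" "card Y \<le> card Y'" "\<And>Z. Y \<subseteq> Z \<Longrightarrow> Y' \<subseteq> supplement Z v F"
    using supplement_origins[OF assms(1,2)] by blast
  have "sat D A \<phi> (supplement Z v F)" if "Y \<subseteq> Z" "Z \<subseteq> X" for Z
    using assms(3) Y(3)[OF that(1)] supplement_mono[OF that(2)] by (rule sat_betweenD)
  with Y(1,2) show thesis by (rule that)
qed

lemma sat_imp_small_sat_between: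
  fixes D :: "'i \<Rightarrow> 'a set \<Rightarrow> 'a list set \<Rightarrow> bool" and \<phi> :: "('v,'i) fm"
  assumes up: "\<And>i. upwards_closed (ar i) (D i)"
    and bounded: "\<And>i. gamma_bounded TYPE('v) (ar i) (D i) (\<gamma> i)"
    and A: "finite_struc A"
  shows "wf_fm ar \<phi> \<Longrightarrow> is_team (univ A) V X \<Longrightarrow> fv \<phi> \<subseteq> V \<Longrightarrow> sat D A \<phi> X \<Longrightarrow>
    \<exists>Y\<subseteq>X. card Y \<le> nu \<gamma> \<phi> (card (univ A)) \<and> sat_between D A \<phi> Y X"
proof (induction \<phi> arbitrary: V X)
  case (Rel b r ts)
  then show ?case by (intro exI[of _ "{}"]) (auto simp: sat_between_def)
next
  case (Eq b t u)
  then show ?case by (intro exI[of _ "{}"]) (auto simp: sat_between_def)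
next
  case (Const vs)
  then show ?case by (intro exI[of _ "{}"]) (auto simp: sat_between_def)
next
  case (Dep i vs)
  obtain Y where Y: "Y \<subseteq> X" "card Y \<le> \<gamma> i (card (univ A))" "D i (univ A) (team_rel Y vs)"
    using gamma_boundedD[OF bounded[of i] finite_struc_univ[OF A] Dep.prems(2), of vs] Dep.prems
    by auto
  have "sat_between D A (Dep i vs) Y X"
    by (rule sat_between_Dep[OF _ Dep.prems(2)]) (use up[of i] Dep.prems Y(3) in simp_all)
  with Y(1,2) show ?case by (intro exI[of _ Y] conjI) simp_all
next
  case (Or \<phi> \<psi>)
  obtain X\<^sub>1 X\<^sub>2 where X: "X = X\<^sub>1 \<union> X\<^sub>2" "sat D A \<phi> X\<^sub>1" "sat D A \<psi> X\<^sub>2"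
    using Or.prems(4) by auto
  have "wf_fm ar \<phi>" "fv \<phi> \<subseteq> V" "wf_fm ar \<psi>" "fv \<psi> \<subseteq> V" using Or.prems(1,3) by simp_all
  then obtain Y\<^sub>1 Y\<^sub>2
    where Y\<^sub>1: "Y\<^sub>1 \<subseteq> X\<^sub>1" "card Y\<^sub>1 \<le> nu \<gamma> \<phi> (card (univ A))" "sat_between D A \<phi> Y\<^sub>1 X\<^sub>1"
      and Y\<^sub>2: "Y\<^sub>2 \<subseteq> X\<^sub>2" "card Y\<^sub>2 \<le> nu \<gamma> \<psi> (card (univ A))" "sat_between D A \<psi> Y\<^sub>2 X\<^sub>2"
    using Or.IH(1)[OF _ is_team_subset[OF Or.prems(2)] _ X(2)]
      Or.IH(2)[OF _ is_team_subset[OF Or.prems(2)] _ X(3)] X(1)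
    by (metis Un_upper1 Un_upper2)
  show ?case
  proof (intro exI[of _ "Y\<^sub>1 \<union> Y\<^sub>2"] conjI)
    show "Y\<^sub>1 \<union> Y\<^sub>2 \<subseteq> X" using X(1) Y\<^sub>1(1) Y\<^sub>2(1) by blast
    show "card (Y\<^sub>1 \<union> Y\<^sub>2) \<le> nu \<gamma> (Or \<phi> \<psi>) (card (univ A))"
      using card_Un_le[of Y\<^sub>1 Y\<^sub>2] Y\<^sub>1(2) Y\<^sub>2(2) by simp
    show "sat_between D A (Or \<phi> \<psi>) (Y\<^sub>1 \<union> Y\<^sub>2) X"
      using sat_between_Or[OF Y\<^sub>1(3) Y\<^sub>2(3) Y\<^sub>1(1) Y\<^sub>2(1)] X(1) by simp
  qed
next
  case (And \<phi> \<psi>)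
  have "wf_fm ar \<phi>" "fv \<phi> \<subseteq> V" "sat D A \<phi> X" "wf_fm ar \<psi>" "fv \<psi> \<subseteq> V" "sat D A \<psi> X"
    using And.prems(1,3,4) by simp_all
  then obtain Y\<^sub>1 Y\<^sub>2
    where Y\<^sub>1: "Y\<^sub>1 \<subseteq> X" "card Y\<^sub>1 \<le> nu \<gamma> \<phi> (card (univ A))" "sat_between D A \<phi> Y\<^sub>1 X"
      and Y\<^sub>2: "Y\<^sub>2 \<subseteq> X" "card Y\<^sub>2 \<le> nu \<gamma> \<psi> (card (univ A))" "sat_between D A \<psi> Y\<^sub>2 X"
    using And.IH(1)[OF _ And.prems(2)] And.IH(2)[OF _ And.prems(2)] by meson
  show ?case
  proof (intro exI[of _ "Y\<^sub>1 \<union> Y\<^sub>2"] conjI)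
    show "Y\<^sub>1 \<union> Y\<^sub>2 \<subseteq> X" using Y\<^sub>1(1) Y\<^sub>2(1) by (rule Un_least)
    show "card (Y\<^sub>1 \<union> Y\<^sub>2) \<le> nu \<gamma> (And \<phi> \<psi>) (card (univ A))"
      using card_Un_le[of Y\<^sub>1 Y\<^sub>2] Y\<^sub>1(2) Y\<^sub>2(2) by simp
    show "sat_between D A (And \<phi> \<psi>) (Y\<^sub>1 \<union> Y\<^sub>2) X"
      using Y\<^sub>1(3) Y\<^sub>2(3) by (rule sat_between_And)
  qed
next
  case (CDisj \<phi> \<psi>)
  have wf: "wf_fm ar \<phi>" "fv \<phi> \<subseteq> V" "wf_fm ar \<psi>" "fv \<psi> \<subseteq> V" using CDisj.prems(1,3) by simp_all
  consider "sat D A \<phi> X" | "sat D A \<psi> X" using CDisj.prems(4) by auto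
  then show ?case
  proof cases
    case 1
    then obtain Y where "Y \<subseteq> X" "card Y \<le> nu \<gamma> \<phi> (card (univ A))" "sat_between D A \<phi> Y X"
      using CDisj.IH(1)[OF wf(1) CDisj.prems(2) wf(2)] by meson
    then show ?thesis unfolding sat_between_def by (intro exI[of _ Y]) auto
  next
    case 2
    then obtain Y where "Y \<subseteq> X" "card Y \<le> nu \<gamma> \<psi> (card (univ A))" "sat_between D A \<psi> Y X"
      using CDisj.IH(2)[OF wf(3) CDisj.prems(2) wf(4)] by meson
    then show ?thesis unfolding sat_between_def by (intro exI[of _ Y]) auto
  qed
next
  case (Ex v \<phi>)
  obtain F where F: "\<forall>s\<in>X. F s \<subseteq> univ A \<and> F s \<noteq> {}"
    and F_sat: "sat D A \<phi> (supplement X v F)"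
    using Ex.prems(4) by auto
  have team: "is_team (univ A) (insert v V) (supplement X v F)"
    by (rule is_team_supplement[OF Ex.prems(2)]) (use F in blast)
  have "wf_fm ar \<phi>" "fv \<phi> \<subseteq> insert v V" using Ex.prems(1,3) by auto
  then obtain Y' where Y': "Y' \<subseteq> supplement X v F" "card Y' \<le> nu \<gamma> \<phi> (card (univ A))"
    "sat_between D A \<phi> Y' (supplement X v F)"
    using Ex.IH[OF _ team _ F_sat] by meson
  have "finite Y'"
    by (rule finite_subset[OF Y'(1) is_team_finite[OF team finite_struc_univ(1)[OF A]]])
  then obtain Y where Y: "Y \<subseteq> X" "card Y \<le> card Y'"
    and Y_sat: "\<And>Z. Y \<subseteq> Z \<Longrightarrow> Z \<subseteq> X \<Longrightarrow> sat D A \<phi> (supplement Z v F)"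
    by (rule sat_between_supplement[OF _ Y'(1,3)]) iprover
  have "sat_between D A (Ex v \<phi>) Y X"
  proof (rule sat_betweenI)
    fix Z assume "Y \<subseteq> Z" "Z \<subseteq> X"
    then have "(\<forall>s\<in>Z. F s \<subseteq> univ A \<and> F s \<noteq> {}) \<and> sat D A \<phi> (supplement Z v F)"
      using F Y_sat by blast
    then show "sat D A (Ex v \<phi>) Z" unfolding sat.simps by (rule exI[of _ F])
  qed
  with Y show ?case using Y'(2) by (intro exI[of _ Y] conjI) simp_all
next
  case (All v \<phi>)
  have team: "is_team (univ A) (insert v V) (supplement X v (\<lambda>_. univ A))"
    by (rule is_team_supplement[OF All.prems(2)]) simp
  have "wf_fm ar \<phi>" "fv \<phi> \<subseteq> insert v V" "sat D A \<phi> (supplement X v (\<lambda>_. univ A))"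
    using All.prems(1,3,4) by auto
  then obtain Y' where Y': "Y' \<subseteq> supplement X v (\<lambda>_. univ A)" "card Y' \<le> nu \<gamma> \<phi> (card (univ A))"
    "sat_between D A \<phi> Y' (supplement X v (\<lambda>_. univ A))"
    using All.IH[OF _ team] by meson
  have "finite Y'"
    by (rule finite_subset[OF Y'(1) is_team_finite[OF team finite_struc_univ(1)[OF A]]])
  then obtain Y where Y: "Y \<subseteq> X" "card Y \<le> card Y'"
    and Y_sat: "\<And>Z. Y \<subseteq> Z \<Longrightarrow> Z \<subseteq> X \<Longrightarrow> sat D A \<phi> (supplement Z v (\<lambda>_. univ A))"
    by (rule sat_between_supplement[OF _ Y'(1,3)]) iprover
  have "sat_between D A (All v \<phi>) Y X"
    by (rule sat_betweenI) (simp add: Y_sat)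
  with Y show ?case using Y'(2) by (intro exI[of _ Y] conjI) simp_all
qed

theorem mainTheorem8:
  fixes D :: "'i \<Rightarrow> 'a set \<Rightarrow> 'a list set \<Rightarrow> bool"
    and ar :: "'i \<Rightarrow> nat"
    and \<gamma> :: "'i \<Rightarrow> nat \<Rightarrow> nat"
    and \<phi> :: "('v,'i) fm"
    and A :: "'a struc"
    and V :: "'v set"
    and X :: "('v,'a) assign set"
  assumes "\<And>i. dep_notion (ar i) (D i)"
    and "\<And>i. upwards_closed (ar i) (D i)"
    and "\<And>i. gamma_bounded TYPE('v) (ar i) (D i) (\<gamma> i)"
    and "wf_fm ar \<phi>"
    and "finite_struc A"
    and "is_team (univ A) V X"
    and "fv \<phi> \<subseteq> V"
    and "sat D A \<phi> X"
  shows "\<exists>Y\<subseteq>X. card Y \<le> nu \<gamma> \<phi> (card (univ A)) \<and> sat D A \<phi> Y"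
proof -
  obtain Y where Y: "Y \<subseteq> X" "card Y \<le> nu \<gamma> \<phi> (card (univ A))" "sat_between D A \<phi> Y X"
    using sat_imp_small_sat_between[OF assms(2,3,5,4,6,7,8)] by meson
  have "sat D A \<phi> Y" using Y(3) order_refl Y(1) by (rule sat_betweenD)
  with Y(1,2) show ?thesis by blast
qed

end
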